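(* Let $\Lambda$ be a lattice and $\Lambda'\subseteq\Lambda$ a sublattice of index $p^\alpha q$, where $\alpha\ge 0$ and $q$ is not divisible by $p$. Then there exists a unique sublattice $\Lambda''$ of index $q$ in $\Lambda$ with $\Lambda'\subseteq\Lambda''\subseteq\Lambda$. Moreover, for every $t\ge1$ and every $\bar a=(a_1,\ldots,a_t)\in(\mathcal F^0(\Lambda,K))^t$, $$\mathrm{CharPoly}_{\bar a,\Lambda'}=\big(\mathrm{CharPoly}_{\bar a,\Lambda''}\big)^{p^\alpha}.$$
   Context: $K$ is a field of characteristic $p>0$. A lattice is a free abelian group of finite rank. For an abelian group $G$, $\mathcal F(G,K)$ is the space of all functions $G\to K$ and $\mathcal F^0(G,K)$ the subspace of finitely supported ones. For $f\in\mathcal F(G,K)$, $a\in\mathcal F^0(G,K)$, $(f*a)(g)=\sum_{h\in G}f(h)a(g-h)$ and $\Delta_a f=f*a$. For a finite-index sublattice $\Lambda'\subseteq\Lambda$, $\mathcal F_{\Lambda'}(\Lambda,K)$ is the (finite-dimensional, $\Delta_a$-stable) space of functions $f$ with $f(v+w)=f(v)$ for all $v\in\Lambda$, $w\in\Lambda'$. $\mathrm{CharPoly}_{\bar a,\Lambda'}$ is the monic gcd of the characteristic polynomials of $\Delta_{a_j}|_{\mathcal F_{\Lambda'}(\Lambda,K)}$, $j=1,\ldots,t$. *)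

theory Defs
  imports "HOL-Library.Function_Algebras" "HOL-Computational_Algebra.Polynomial_Factorial"
          "Jordan_Normal_Form.Char_Poly"
begin

text \<open>The lattice Lambda is modelled as Z^n = ('n => int) for a finite index type 'n.
  Sublattices are subgroups.\<close>

definition sublattice :: "('n::finite \<Rightarrow> int) set \<Rightarrow> bool" where
  "sublattice L \<longleftrightarrow> 0 \<in> L \<and> (\<forall>x\<in>L. \<forall>y\<in>L. x + y \<in> L) \<and> (\<forall>x\<in>L. - x \<in> L)"

text \<open>Index of L in Z^n: number of cosets (0 if infinite).\<close>
definition lat_index :: "('n::finite \<Rightarrow> int) set \<Rightarrow> nat" where
  "lat_index L = card ((\<lambda>v. (\<lambda>w. v + w) ` L) ` UNIV)"

definition fin_supp :: "(('n \<Rightarrow> int) \<Rightarrow> 'k::zero) \<Rightarrow> bool" where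
  "fin_supp a \<longleftrightarrow> finite {x. a x \<noteq> 0}"

definition conv :: "(('n::finite \<Rightarrow> int) \<Rightarrow> 'k::field) \<Rightarrow> (('n \<Rightarrow> int) \<Rightarrow> 'k) \<Rightarrow> ('n \<Rightarrow> int) \<Rightarrow> 'k" where
  "conv f a g = (\<Sum>h\<in>{h. a (g - h) \<noteq> 0}. f h * a (g - h))"

definition periodic_funs :: "('n::finite \<Rightarrow> int) set \<Rightarrow> (('n \<Rightarrow> int) \<Rightarrow> 'k::field) set" where
  "periodic_funs L = {f. \<forall>v. \<forall>w\<in>L. f (v + w) = f v}"

definition fscale :: "'k::field \<Rightarrow> ('a \<Rightarrow> 'k) \<Rightarrow> ('a \<Rightarrow> 'k)" where
  "fscale c f = (\<lambda>x. c * f x)"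

definition charpoly_on :: "(('a \<Rightarrow> 'k::field) set) \<Rightarrow> (('a \<Rightarrow> 'k) \<Rightarrow> ('a \<Rightarrow> 'k)) \<Rightarrow> 'k poly" where
  "charpoly_on V T =
    (let bs = (SOME bs. distinct bs \<and> \<not> module.dependent fscale (set bs)
                        \<and> module.span fscale (set bs) = V)
     in char_poly (mat (length bs) (length bs)
           (\<lambda>(i, j). module.representation fscale (set bs) (T (bs ! j)) (bs ! i))))"

definition CharPoly :: "(('n::finite \<Rightarrow> int) \<Rightarrow> 'k::field_gcd) list \<Rightarrow> ('n \<Rightarrow> int) set \<Rightarrow> 'k poly" where
  "CharPoly as L = Gcd (set (map (\<lambda>a. charpoly_on (periodic_funs L) (\<lambda>f. conv f a)) as))"

end

theory Submission
  imports Defs "HOL-Library.Poly_Mapping"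
begin

(* Write m = p^alpha. The only candidate for the intermediate lattice is
   L'' = {v. m v \<in> L'}: the quotient by L' splits into the parts killed by m and by q, whose
   orders divide powers of the coprime numbers m and q and hence are m and q.

   In the basis of coset indicators of F_{L'}, the operator Delta_a is the matrix of the element a
   of the group ring K[X][Lambda], and its characteristic polynomial is the determinant of the
   matrix of X - a. In characteristic p, (X - a)^m is supported on m Lambda, which lies in
   LQ = {v. q v \<in> L'}. Since LQ and L'' meet in L' and together span Lambda, an element
   supported on LQ acts on F_{L'} block-diagonally, with m blocks all equal to its matrix on
   F_{L''}. Taking determinants gives chi'^m = (chi''^m)^m, and injectivity of Frobenius yields
   chi' = chi''^m for every a_j; greatest common divisors commute with m-th powers. *)

section \<open>Sublattices and coset representatives\<close>

context
  fixes L :: "('n::finite \<Rightarrow> int) set"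
  assumes L: "sublattice L"
begin

lemma sublattice_zero: "0 \<in> L"
  using L by (simp add: sublattice_def)

lemma sublattice_add: "x \<in> L \<Longrightarrow> y \<in> L \<Longrightarrow> x + y \<in> L"
  using L by (simp add: sublattice_def)

lemma sublattice_uminus: "x \<in> L \<Longrightarrow> - x \<in> L"
  using L by (simp add: sublattice_def)

lemma sublattice_diff: "x \<in> L \<Longrightarrow> y \<in> L \<Longrightarrow> x - y \<in> L"
  using sublattice_add[of x "- y"] sublattice_uminus[of y] by simp

lemma sublattice_diff_commute: "x - y \<in> L \<Longrightarrow> y - x \<in> L"
  using sublattice_uminus[of "x - y"] by simp

lemma sublattice_of_nat_mult: "x \<in> L \<Longrightarrow> of_nat n * x \<in> L"
  by (induction n) (auto simp: sublattice_zero distrib_right intro: sublattice_add)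

lemma sublattice_of_int_mult: "x \<in> L \<Longrightarrow> of_int z * x \<in> L"
  by (cases z rule: int_cases2) (auto intro: sublattice_of_nat_mult sublattice_uminus)

lemma sublattice_coset_eq_iff: "(\<lambda>w. x + w) ` L = (\<lambda>w. y + w) ` L \<longleftrightarrow> x - y \<in> L"
proof
  assume "(\<lambda>w. x + w) ` L = (\<lambda>w. y + w) ` L"
  moreover have "x \<in> (\<lambda>w. x + w) ` L" using sublattice_zero by force
  ultimately obtain w where "w \<in> L" "x = y + w" by auto
  then show "x - y \<in> L" by simp
next
  have shift: "(\<lambda>w. x + w) ` L \<subseteq> (\<lambda>w. y + w) ` L" if "x - y \<in> L" for x y
  proof
    fix z assume "z \<in> (\<lambda>w. x + w) ` L"
    then obtain w where w: "w \<in> L" "z = x + w" by auto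
    then have "z = y + ((x - y) + w)" by simp
    then show "z \<in> (\<lambda>w. y + w) ` L" using sublattice_add[OF that w(1)] by blast
  qed
  assume "x - y \<in> L"
  then show "(\<lambda>w. x + w) ` L = (\<lambda>w. y + w) ` L"
    using shift sublattice_diff_commute by blast
qed

end

lemma sublattice_UNIV: "sublattice (UNIV :: ('n::finite \<Rightarrow> int) set)"
  by (simp add: sublattice_def)

definition cosets :: "('n::finite \<Rightarrow> int) set \<Rightarrow> ('n \<Rightarrow> int) set \<Rightarrow> ('n \<Rightarrow> int) set set" where
  "cosets B A = (\<lambda>v. (\<lambda>w. v + w) ` A) ` B"

lemma lat_index_eq_card_cosets: "lat_index L = card (cosets UNIV L)"
  by (simp add: lat_index_def cosets_def)

definition coset_reps :: "('n::finite \<Rightarrow> int) set \<Rightarrow> ('n \<Rightarrow> int) set \<Rightarrow> ('n \<Rightarrow> int) list \<Rightarrow> bool" where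
  "coset_reps B A rs \<longleftrightarrow> set rs \<subseteq> B
     \<and> (\<forall>i<length rs. \<forall>j<length rs. rs ! i - rs ! j \<in> A \<longrightarrow> i = j)
     \<and> (\<forall>b\<in>B. \<exists>i<length rs. b - rs ! i \<in> A)"

lemma coset_reps_nth_mem: "coset_reps B A rs \<Longrightarrow> i < length rs \<Longrightarrow> rs ! i \<in> B"
  by (auto simp: coset_reps_def)

lemma coset_reps_nth_eqD:
  "coset_reps B A rs \<Longrightarrow> i < length rs \<Longrightarrow> j < length rs \<Longrightarrow> rs ! i - rs ! j \<in> A \<Longrightarrow> i = j"
  by (auto simp: coset_reps_def)

lemma coset_reps_cover:
  assumes "coset_reps B A rs" "b \<in> B"
  obtains i where "i < length rs" "b - rs ! i \<in> A"
  using assms by (auto simp: coset_reps_def)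

lemma coset_reps_length_pos: "coset_reps B A rs \<Longrightarrow> b \<in> B \<Longrightarrow> length rs > 0"
  by (auto simp: coset_reps_def)

lemma card_cosets_coset_reps:
  assumes A: "sublattice A" and rs: "coset_reps B A rs"
  shows "card (cosets B A) = length rs"
proof -
  have "cosets B A = (\<lambda>i. (\<lambda>w. rs ! i + w) ` A) ` {..<length rs}"
  proof (rule Set.set_eqI, rule iffI)
    fix C assume "C \<in> cosets B A"
    then obtain b where b: "b \<in> B" "C = (\<lambda>w. b + w) ` A" by (auto simp: cosets_def)
    obtain i where "i < length rs" "b - rs ! i \<in> A" by (rule coset_reps_cover[OF rs b(1)])
    then show "C \<in> (\<lambda>i. (\<lambda>w. rs ! i + w) ` A) ` {..<length rs}"
      using b sublattice_coset_eq_iff[OF A] by auto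
  next
    fix C assume "C \<in> (\<lambda>i. (\<lambda>w. rs ! i + w) ` A) ` {..<length rs}"
    then show "C \<in> cosets B A"
      using coset_reps_nth_mem[OF rs] by (auto simp: cosets_def)
  qed
  moreover have "inj_on (\<lambda>i. (\<lambda>w. rs ! i + w) ` A) {..<length rs}"
    using coset_reps_nth_eqD[OF rs] sublattice_coset_eq_iff[OF A] by (auto simp: inj_on_def)
  ultimately show ?thesis by (simp add: card_image)
qed

lemma coset_reps_exist:
  assumes A: "sublattice A" and fin: "finite (cosets B A)"
  obtains rs where "coset_reps B A rs"
proof -
  obtain cs where cs: "set cs = cosets B A" "distinct cs"
    using finite_distinct_list[OF fin] by blast
  define rs where "rs = map (\<lambda>c. SOME b. b \<in> B \<and> c = (\<lambda>w. b + w) ` A) cs"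
  have len: "length rs = length cs" by (simp add: rs_def)
  have rs_nth: "rs ! i \<in> B \<and> cs ! i = (\<lambda>w. rs ! i + w) ` A" if "i < length cs" for i
  proof -
    have "\<exists>b. b \<in> B \<and> cs ! i = (\<lambda>w. b + w) ` A"
      using nth_mem[OF that] cs(1) by (auto simp: cosets_def)
    from someI_ex[OF this] show ?thesis unfolding rs_def using that by simp
  qed
  have "coset_reps B A rs"
    unfolding coset_reps_def
  proof (intro conjI allI impI ballI)
    show "set rs \<subseteq> B"
      using rs_nth len by (auto simp: in_set_conv_nth)
  next
    fix i j assume ij: "i < length rs" "j < length rs" "rs ! i - rs ! j \<in> A"
    then have "cs ! i = cs ! j"
      using rs_nth[of i] rs_nth[of j] len sublattice_coset_eq_iff[OF A, of "rs ! i" "rs ! j"] by simp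
    then show "i = j" using cs(2) ij len by (simp add: nth_eq_iff_index_eq)
  next
    fix b assume "b \<in> B"
    then have "(\<lambda>w. b + w) ` A \<in> set cs" using cs(1) by (auto simp: cosets_def)
    then obtain i where i: "i < length cs" "cs ! i = (\<lambda>w. b + w) ` A"
      by (auto simp: in_set_conv_nth)
    then have "b - rs ! i \<in> A"
      using rs_nth[OF i(1)] sublattice_coset_eq_iff[OF A, of b "rs ! i"] by simp
    then show "\<exists>i<length rs. b - rs ! i \<in> A" using i len by auto
  qed
  then show ?thesis by (rule that)
qed

lemma coset_reps_exist_lat_index:
  assumes "sublattice L" "lat_index L > 0"
  obtains rs where "coset_reps UNIV L rs" "length rs = lat_index L"
proof -
  have "finite (cosets UNIV L)"
    using assms(2) card.infinite by (fastforce simp: lat_index_eq_card_cosets)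
  then obtain rs where "coset_reps UNIV L rs" using coset_reps_exist[OF assms(1)] by blast
  then show ?thesis
    using that card_cosets_coset_reps[OF assms(1)] by (simp add: lat_index_eq_card_cosets)
qed

lemma lat_index_coset_reps:
  "sublattice L \<Longrightarrow> coset_reps UNIV L rs \<Longrightarrow> lat_index L = length rs"
  by (simp add: lat_index_eq_card_cosets card_cosets_coset_reps)

lemma coset_reps_exist_mono:
  assumes A': "sublattice A'" and "A \<subseteq> A'" and rs: "coset_reps B A rs" and "B' \<subseteq> B"
  obtains rs' where "coset_reps B' A' rs'"
proof (rule coset_reps_exist[OF A'])
  have "cosets B' A' \<subseteq> (\<lambda>i. (\<lambda>w. rs ! i + w) ` A') ` {..<length rs}"
  proof
    fix X assume "X \<in> cosets B' A'"
    then obtain b where b: "b \<in> B'" "X = (\<lambda>w. b + w) ` A'" by (auto simp: cosets_def)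
    then obtain i where "i < length rs" "b - rs ! i \<in> A"
      using coset_reps_cover[OF rs] \<open>B' \<subseteq> B\<close> by blast
    then show "X \<in> (\<lambda>i. (\<lambda>w. rs ! i + w) ` A') ` {..<length rs}"
      using b sublattice_coset_eq_iff[OF A'] \<open>A \<subseteq> A'\<close> by blast
  qed
  then show "finite (cosets B' A')" using finite_subset by blast
qed

definition reps_sum :: "('n \<Rightarrow> int) list \<Rightarrow> ('n \<Rightarrow> int) list \<Rightarrow> ('n \<Rightarrow> int) list" where
  "reps_sum s t = map (\<lambda>x. s ! (x div length t) + t ! (x mod length t)) [0..<length s * length t]"

lemma length_reps_sum [simp]: "length (reps_sum s t) = length s * length t"
  by (simp add: reps_sum_def)

lemma nth_reps_sum:
  "x < length s * length t \<Longrightarrow> reps_sum s t ! x = s ! (x div length t) + t ! (x mod length t)"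
  by (simp add: reps_sum_def)

lemma div_mod_less_length:
  "x < m * (k::nat) \<Longrightarrow> x div k < m \<and> x mod k < k"
  by (cases "k = 0") (auto simp: less_mult_imp_div_less)

lemma coset_reps_reps_sum:
  assumes A: "sublattice A" and B: "sublattice B" and C: "sublattice C"
    and "A \<subseteq> B" "B \<subseteq> C"
    and s: "coset_reps C B s" and t: "coset_reps B A t"
  shows "coset_reps C A (reps_sum s t)"
  unfolding coset_reps_def
proof (intro conjI allI impI ballI)
  let ?k = "length t"
  have dm: "x div ?k < length s" "x mod ?k < ?k" if "x < length s * ?k" for x
    using div_mod_less_length[OF that] by auto
  show "set (reps_sum s t) \<subseteq> C"
    using coset_reps_nth_mem[OF s] coset_reps_nth_mem[OF t] dm \<open>B \<subseteq> C\<close>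
    by (auto simp: reps_sum_def intro!: sublattice_add[OF C])
  fix x y assume xy: "x < length (reps_sum s t)" "y < length (reps_sum s t)"
    "reps_sum s t ! x - reps_sum s t ! y \<in> A"
  then have x: "x < length s * ?k" and y: "y < length s * ?k" by auto
  let ?ds = "s ! (x div ?k) - s ! (y div ?k)" and ?dt = "t ! (x mod ?k) - t ! (y mod ?k)"
  have sum: "?ds + ?dt \<in> A"
    using xy(3) by (simp add: nth_reps_sum x y algebra_simps)
  have "?dt \<in> B"
    using coset_reps_nth_mem[OF t] dm x y by (auto intro: sublattice_diff[OF B])
  then have "?ds \<in> B"
    using sublattice_diff[OF B, of "?ds + ?dt" ?dt] sum \<open>A \<subseteq> B\<close> by auto
  then have "x div ?k = y div ?k"
    using coset_reps_nth_eqD[OF s] dm x y by blast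
  then have "x mod ?k = y mod ?k"
    using sum coset_reps_nth_eqD[OF t] dm x y by auto
  with \<open>x div ?k = y div ?k\<close> show "x = y" by (metis div_mult_mod_eq)
next
  fix c assume "c \<in> C"
  then obtain i where i: "i < length s" "c - s ! i \<in> B" by (rule coset_reps_cover[OF s])
  obtain j where j: "j < length t" "c - s ! i - t ! j \<in> A" by (rule coset_reps_cover[OF t i(2)])
  have "i * length t + j < Suc i * length t" using j(1) by simp
  also have "\<dots> \<le> length s * length t" using i(1) by (intro mult_le_mono1) simp
  finally have x: "i * length t + j < length s * length t" .
  have "0 < length t" using j(1) by linarith
  then have "(i * length t + j) div length t = i" "(i * length t + j) mod length t = j"
    using j(1) by auto
  then have "reps_sum s t ! (i * length t + j) = s ! i + t ! j"
    by (simp add: nth_reps_sum[OF x])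
  then have "c - reps_sum s t ! (i * length t + j) \<in> A"
    using j(2) by (simp add: algebra_simps)
  then show "\<exists>x<length (reps_sum s t). c - reps_sum s t ! x \<in> A"
    using x by (intro exI[of _ "i * length t + j"]) auto
qed

lemma coset_reps_length_mult:
  assumes A: "sublattice A" and B: "sublattice B" and C: "sublattice C"
    and "A \<subseteq> B" "B \<subseteq> C"
    and s: "coset_reps C B s" and t: "coset_reps B A t" and r: "coset_reps C A r"
  shows "length r = length s * length t"
  using card_cosets_coset_reps[OF A r] card_cosets_coset_reps[OF A coset_reps_reps_sum[OF assms(1-7)]]
  by simp

section \<open>Orders and indices\<close>

definition lattice_adjoin :: "('n::finite \<Rightarrow> int) set \<Rightarrow> ('n \<Rightarrow> int) \<Rightarrow> ('n \<Rightarrow> int) set" where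
  "lattice_adjoin A b = {a + of_int z * b | a z. a \<in> A}"

lemma sublattice_adjoin:
  assumes A: "sublattice A" shows "sublattice (lattice_adjoin A b)"
  unfolding sublattice_def lattice_adjoin_def
proof (intro conjI ballI)
  show "0 \<in> {a + of_int z * b |a z. a \<in> A}"
    using sublattice_zero[OF A] by (intro CollectI exI[of _ 0]) auto
next
  fix x y assume "x \<in> {a + of_int z * b |a z. a \<in> A}" "y \<in> {a + of_int z * b |a z. a \<in> A}"
  then obtain a1 z1 a2 z2 where "a1 \<in> A" "a2 \<in> A" "x = a1 + of_int z1 * b" "y = a2 + of_int z2 * b"
    by auto
  then show "x + y \<in> {a + of_int z * b |a z. a \<in> A}"
    using sublattice_add[OF A]
    by (intro CollectI exI[of _ "a1 + a2"] exI[of _ "z1 + z2"]) (auto simp: algebra_simps)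
next
  fix x assume "x \<in> {a + of_int z * b |a z. a \<in> A}"
  then obtain a1 z1 where "a1 \<in> A" "x = a1 + of_int z1 * b" by auto
  then show "- x \<in> {a + of_int z * b |a z. a \<in> A}"
    using sublattice_uminus[OF A]
    by (intro CollectI exI[of _ "- a1"] exI[of _ "- z1"]) (auto simp: algebra_simps)
qed

lemma subset_lattice_adjoin: "A \<subseteq> lattice_adjoin A b"
  unfolding lattice_adjoin_def by (force intro: exI[of _ "0::int"])

lemma lattice_adjoin_subset:
  "sublattice B \<Longrightarrow> A \<subseteq> B \<Longrightarrow> b \<in> B \<Longrightarrow> lattice_adjoin A b \<subseteq> B"
  unfolding lattice_adjoin_def using sublattice_add sublattice_of_int_mult by blast

text \<open>Only meaningful when some positive multiple of \<open>b\<close> lies in \<open>A\<close>; otherwise \<open>LEAST\<close>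
  returns an unspecified value.\<close>

definition rel_order :: "('n::finite \<Rightarrow> int) set \<Rightarrow> ('n \<Rightarrow> int) \<Rightarrow> nat" where
  "rel_order A b = (LEAST d. 0 < d \<and> of_nat d * b \<in> A)"

context
  fixes A :: "('n::finite \<Rightarrow> int) set" and b :: "'n \<Rightarrow> int" and e :: nat
  assumes A: "sublattice A" and e: "e > 0" "of_nat e * b \<in> A"
begin

lemma rel_order: "0 < rel_order A b" "of_nat (rel_order A b) * b \<in> A"
  using LeastI[of "\<lambda>d. 0 < d \<and> of_nat d * b \<in> A" e] e by (auto simp: rel_order_def)

lemma rel_order_minimal: "0 < r \<Longrightarrow> r < rel_order A b \<Longrightarrow> of_nat r * b \<notin> A"
  using not_less_Least[of r "\<lambda>d. 0 < d \<and> of_nat d * b \<in> A"] by (auto simp: rel_order_def)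

lemma rel_order_dvd: "rel_order A b dvd e"
proof -
  let ?d = "rel_order A b"
  have "(of_nat e :: 'n \<Rightarrow> int) = of_nat (e div ?d) * of_nat ?d + of_nat (e mod ?d)"
    by (metis div_mult_mod_eq of_nat_add of_nat_mult)
  then have "of_nat (e mod ?d) * b = of_nat e * b - of_nat (e div ?d) * (of_nat ?d * b)"
    by (simp add: algebra_simps)
  also have "\<dots> \<in> A"
    by (intro sublattice_diff[OF A] e(2) sublattice_of_nat_mult[OF A] rel_order(2))
  finally have "of_nat (e mod ?d) * b \<in> A" .
  then have "e mod ?d = 0"
    using rel_order_minimal[of "e mod ?d"] rel_order(1) by (cases "e mod ?d = 0") auto
  then show ?thesis by (simp add: mod_eq_0_iff_dvd)
qed

lemma rel_order_gt_1:
  assumes "b \<notin> A" shows "rel_order A b > 1"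
proof -
  have "rel_order A b \<noteq> 1"
  proof
    assume "rel_order A b = 1"
    then show False using rel_order(2) assms by simp
  qed
  then show ?thesis using rel_order(1) by linarith
qed

lemma coset_reps_adjoin:
  "coset_reps (lattice_adjoin A b) A (map (\<lambda>i. of_nat i * b) [0..<rel_order A b])"
  unfolding coset_reps_def
proof (intro conjI allI impI ballI)
  let ?d = "rel_order A b"
  show "set (map (\<lambda>i. of_nat i * b) [0..<?d]) \<subseteq> lattice_adjoin A b"
    unfolding lattice_adjoin_def using sublattice_zero[OF A] by (auto intro!: exI[of _ 0] exI[of _ "int _"])
next
  let ?d = "rel_order A b"
  fix i j assume ij: "i < length (map (\<lambda>i. of_nat i * b) [0..<?d])"
    "j < length (map (\<lambda>i. of_nat i * b) [0..<?d])"
    "map (\<lambda>i. of_nat i * b) [0..<?d] ! i - map (\<lambda>i. of_nat i * b) [0..<?d] ! j \<in> A"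
  then have ij': "i < ?d" "j < ?d" "of_nat i * b - of_nat j * b \<in> A" by auto
  have False if "j < i" "i < ?d" "of_nat i * b - of_nat j * b \<in> A" for i j
  proof -
    have "0 < i - j" "i - j < ?d" using that by auto
    moreover have "of_nat (i - j) * b \<in> A" using that by (simp add: of_nat_diff algebra_simps)
    ultimately show False using rel_order_minimal by (simp del: of_nat_diff)
  qed
  then show "i = j"
    using ij' sublattice_diff_commute[OF A] by (cases i j rule: linorder_cases) blast+
next
  let ?d = "rel_order A b"
  fix x assume "x \<in> lattice_adjoin A b"
  then obtain a z where az: "a \<in> A" "x = a + of_int z * b" by (auto simp: lattice_adjoin_def)
  define r where "r = nat (z mod int ?d)"
  have r: "r < ?d" "int r = z mod int ?d" using rel_order(1) by (auto simp: r_def nat_less_iff)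
  have "(of_int z :: 'n \<Rightarrow> int) = of_int (z div int ?d) * of_nat ?d + of_nat r"
    by (metis r(2) div_mult_mod_eq of_int_add of_int_mult of_int_of_nat_eq)
  then have "x - of_nat r * b = a + of_int (z div int ?d) * (of_nat ?d * b)"
    using az by (simp add: algebra_simps)
  also have "\<dots> \<in> A"
    using az rel_order(2) by (intro sublattice_add[OF A] sublattice_of_int_mult[OF A])
  finally show "\<exists>i<length (map (\<lambda>i. of_nat i * b) [0..<?d]). x - map (\<lambda>i. of_nat i * b) [0..<?d] ! i \<in> A"
    using r by (intro exI[of _ r]) auto
qed

end

lemma coset_reps_length_adjoin:
  assumes A: "sublattice A" and B: "sublattice B" and "A \<subseteq> B" and rs: "coset_reps B A rs"
    and b: "b \<in> B" and e: "e > 0" "of_nat e * b \<in> A"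
  obtains rs' where "coset_reps B (lattice_adjoin A b) rs'"
    "length rs = length rs' * rel_order A b"
proof -
  obtain rs' where rs': "coset_reps B (lattice_adjoin A b) rs'"
    using coset_reps_exist_mono[OF sublattice_adjoin[OF A] subset_lattice_adjoin rs order_refl] .
  have "length rs = length rs' * length (map (\<lambda>i. of_nat i * b) [0..<rel_order A b])"
    by (rule coset_reps_length_mult[OF A sublattice_adjoin[OF A] B subset_lattice_adjoin
          lattice_adjoin_subset[OF B \<open>A \<subseteq> B\<close> b] rs' coset_reps_adjoin[OF A e] rs])
  then show ?thesis using that rs' by simp
qed

lemma exists_mult_mem_coset_reps:
  assumes A: "sublattice A" and B: "sublattice B" and rs: "coset_reps B A rs" and v: "v \<in> B"
  obtains e where "e > 0" "of_nat e * v \<in> A"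
proof -
  let ?n = "length rs"
  define f where "f k = (SOME i. i < ?n \<and> of_nat k * v - rs ! i \<in> A)" for k :: nat
  have "\<exists>i. i < ?n \<and> of_nat k * v - rs ! i \<in> A" for k
    using coset_reps_cover[OF rs sublattice_of_nat_mult[OF B v]] by blast
  then have "f k < ?n \<and> of_nat k * v - rs ! f k \<in> A" for k
    unfolding f_def by (rule someI_ex)
  then have f: "f k < ?n" "of_nat k * v - rs ! f k \<in> A" for k
    by auto
  have "\<not> inj_on f {0..?n}"
  proof
    assume "inj_on f {0..?n}"
    moreover have "f ` {0..?n} \<subseteq> {..<?n}" using f by auto
    ultimately have "card {0..?n} \<le> card {..<?n}" by (intro card_inj_on_le) auto
    then show False by simp
  qed
  then obtain k1 k2 where k: "k1 \<noteq> k2" "f k1 = f k2"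
    unfolding inj_on_def by blast
  have key: "\<exists>e>0. of_nat e * v \<in> A" if "k1 < k2" "f k1 = f k2" for k1 k2
  proof -
    have "(of_nat k2 * v - rs ! f k2) - (of_nat k1 * v - rs ! f k1) \<in> A"
      by (rule sublattice_diff[OF A f(2) f(2)])
    then have "of_nat (k2 - k1) * v \<in> A" using that by (simp add: of_nat_diff algebra_simps)
    moreover have "0 < k2 - k1" using that by simp
    ultimately show ?thesis by blast
  qed
  show ?thesis
  proof (cases "k1 < k2")
    case True
    then show ?thesis using key[OF True k(2)] that by blast
  next
    case False
    then have "k2 < k1" using k(1) by linarith
    then show ?thesis using key[OF _ k(2)[symmetric]] that by blast
  qed
qed

theorem coset_reps_length_mult_mem:
  assumes A: "sublattice A" and B: "sublattice B" and "A \<subseteq> B" and rs: "coset_reps B A rs"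
    and v: "v \<in> B"
  shows "of_nat (length rs) * v \<in> A"
proof -
  obtain e where e: "e > 0" "of_nat e * v \<in> A"
    using exists_mult_mem_coset_reps[OF A B rs v] .
  obtain rs' where "coset_reps B (lattice_adjoin A v) rs'" "length rs = length rs' * rel_order A v"
    by (rule coset_reps_length_adjoin[OF A B \<open>A \<subseteq> B\<close> rs v e])
  then have "of_nat (length rs) * v = of_nat (length rs') * (of_nat (rel_order A v) * v)"
    by (simp add: mult.assoc)
  then show ?thesis using sublattice_of_nat_mult[OF A rel_order(2)[OF A e]] by simp
qed

text \<open>Induction on the index: adjoining one element outside \<open>A\<close> divides the index by the
  order of that element, which divides \<open>e\<close>.\<close>

theorem coset_reps_length_dvd_power:
  assumes "sublattice A" "sublattice B" "A \<subseteq> B" "coset_reps B A rs"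
    and "e > 0" "\<And>b. b \<in> B \<Longrightarrow> of_nat e * b \<in> A"
  shows "\<exists>k. length rs dvd e ^ k"
  using assms
proof (induction "length rs" arbitrary: A rs rule: less_induct)
  case less
  note A = less.prems(1) and B = less.prems(2) and rs = less.prems(4)
  show ?case
  proof (cases "length rs \<le> 1")
    case True
    moreover have "length rs > 0" using coset_reps_length_pos[OF rs sublattice_zero[OF B]] .
    ultimately have "length rs = 1" by linarith
    then show ?thesis by (intro exI[of _ 0]) simp
  next
    case False
    define b where "b = rs ! 1 - rs ! 0"
    have b: "b \<in> B"
      unfolding b_def using False by (intro sublattice_diff[OF B] coset_reps_nth_mem[OF rs]) auto
    have "b \<notin> A"
    proof
      assume "b \<in> A"
      then have "(1::nat) = 0"
        using False by (intro coset_reps_nth_eqD[OF rs]) (auto simp: b_def)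
      then show False by simp
    qed
    obtain rs' where rs': "coset_reps B (lattice_adjoin A b) rs'"
      and len: "length rs = length rs' * rel_order A b"
      using coset_reps_length_adjoin[OF A B less.prems(3) rs b less.prems(5) less.prems(6)[OF b]] .
    have order: "rel_order A b > 1" "rel_order A b dvd e"
      using rel_order_gt_1 rel_order_dvd A less.prems(5) less.prems(6)[OF b] \<open>b \<notin> A\<close> by auto
    have "length rs' > 0" using coset_reps_length_pos[OF rs' sublattice_zero[OF B]] .
    then have "length rs' < length rs" using order(1) len by simp
    then have "\<exists>k. length rs' dvd e ^ k"
      using less.prems(5,6) subset_lattice_adjoin[of A b]
      by (intro less.hyps[OF _ sublattice_adjoin[OF A] B
            lattice_adjoin_subset[OF B less.prems(3) b] rs']) auto
    then obtain k where "length rs' * rel_order A b dvd e ^ k * e"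
      using mult_dvd_mono order(2) by blast
    then show ?thesis using len by (metis power_Suc2)
  qed
qed

lemma lat_index_mult_mem:
  assumes L: "sublattice L" and "lat_index L > 0"
  shows "of_nat (lat_index L) * v \<in> L"
proof -
  obtain rs where "coset_reps UNIV L rs" "length rs = lat_index L"
    using coset_reps_exist_lat_index[OF assms] .
  then show ?thesis
    using coset_reps_length_mult_mem[OF L sublattice_UNIV subset_UNIV, of rs v] by simp
qed

lemma sublattice_eq_of_lat_index_eq:
  assumes A: "sublattice A" and B: "sublattice B" and "A \<subseteq> B"
    and index: "lat_index A = lat_index B" "lat_index B > 0"
  shows "A = B"
proof -
  obtain rA where rA: "coset_reps UNIV A rA" "length rA = lat_index A"
    using coset_reps_exist_lat_index[OF A] index by auto
  obtain rB where rB: "coset_reps UNIV B rB" "length rB = lat_index B"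
    using coset_reps_exist_lat_index[OF B] index by auto
  obtain t where t: "coset_reps B A t"
    using coset_reps_exist_mono[OF A order_refl rA(1) subset_UNIV] .
  have "length rA = length rB * length t"
    by (rule coset_reps_length_mult[OF A B sublattice_UNIV \<open>A \<subseteq> B\<close> subset_UNIV rB(1) t rA(1)])
  then have "length t = 1" using rA(2) rB(2) index by simp
  then have "B \<subseteq> A" using coset_reps_length_mult_mem[OF A B \<open>A \<subseteq> B\<close> t] by auto
  then show ?thesis using \<open>A \<subseteq> B\<close> by blast
qed

section \<open>The intermediate lattice\<close>

definition mult_preimage :: "nat \<Rightarrow> ('n::finite \<Rightarrow> int) set \<Rightarrow> ('n \<Rightarrow> int) set" where
  "mult_preimage k L = {v. of_nat k * v \<in> L}"

lemma sublattice_mult_preimage: "sublattice L \<Longrightarrow> sublattice (mult_preimage k L)"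
  unfolding mult_preimage_def
  using sublattice_zero sublattice_add sublattice_uminus
  by (auto simp: sublattice_def distrib_left)

lemma subset_mult_preimage: "sublattice L \<Longrightarrow> L \<subseteq> mult_preimage k L"
  by (auto simp: mult_preimage_def sublattice_of_nat_mult)

lemma coprime_combination:
  assumes "coprime m q"
  shows "\<exists>u w :: int. \<forall>v :: 'n \<Rightarrow> int. v = of_int u * (of_nat m * v) + of_int w * (of_nat q * v)"
proof -
  obtain u w :: int where uw: "u * int m + w * int q = 1"
    using bezout_int[of "int m" "int q"] assms by (auto simp: gcd_int_int_eq)
  have "v = (of_int (u * int m + w * int q)) * v" for v :: "'n \<Rightarrow> int"
    using uw by simp
  then show ?thesis by (auto simp: algebra_simps)
qed

lemma mult_preimage_Int_subset:
  fixes L :: "('n::finite \<Rightarrow> int) set"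
  assumes L: "sublattice L" and "coprime m q"
  shows "mult_preimage m L \<inter> mult_preimage q L \<subseteq> L"
proof
  obtain u w :: int where uw: "\<And>v :: 'n \<Rightarrow> int. v = of_int u * (of_nat m * v) + of_int w * (of_nat q * v)"
    using coprime_combination[OF \<open>coprime m q\<close>] by blast
  fix v assume "v \<in> mult_preimage m L \<inter> mult_preimage q L"
  then have "of_int u * (of_nat m * v) + of_int w * (of_nat q * v) \<in> L"
    by (auto simp: mult_preimage_def intro!: sublattice_add[OF L] sublattice_of_int_mult[OF L])
  then show "v \<in> L" using uw[of v] by simp
qed

lemma mult_preimage_subset:
  fixes L :: "('n::finite \<Rightarrow> int) set"
  assumes L3: "sublattice L3" and "L \<subseteq> L3" and "coprime m q" and q: "\<And>v. of_nat q * v \<in> L3"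
  shows "mult_preimage m L \<subseteq> L3"
proof
  obtain u w :: int where uw: "\<And>v :: 'n \<Rightarrow> int. v = of_int u * (of_nat m * v) + of_int w * (of_nat q * v)"
    using coprime_combination[OF \<open>coprime m q\<close>] by blast
  fix v assume "v \<in> mult_preimage m L"
  then have "of_int u * (of_nat m * v) + of_int w * (of_nat q * v) \<in> L3"
    using \<open>L \<subseteq> L3\<close> q
    by (auto simp: mult_preimage_def intro!: sublattice_add[OF L3] sublattice_of_int_mult[OF L3])
  then show "v \<in> L3" using uw[of v] by simp
qed

lemma coprime_factorization_unique:
  fixes m q a b :: nat
  assumes "coprime m q" "m > 0" "q > 0" "m * q = a * b" "a dvd m ^ k1" "b dvd q ^ k2"
  shows "a = m \<and> b = q"
proof -
  have "coprime (m ^ k1) q" "coprime (q ^ k2) m"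
    using assms(1) by (simp_all add: coprime_commute)
  then have "coprime a q" "coprime b m"
    using assms(5,6) coprime_divisors[OF _ dvd_refl] by blast+
  moreover have "a dvd m * q" "b dvd m * q"
    using assms(4) by simp_all
  ultimately have "a dvd m" "b dvd q"
    using coprime_dvd_mult_left_iff coprime_dvd_mult_right_iff by blast+
  then have "a \<le> m" "b \<le> q"
    using assms(2,3) by (simp_all add: dvd_imp_le)
  then have "a * q = m * q"
    using assms(4) mult_le_mono1[of a m q] mult_le_mono2[of b q a] by linarith
  then have "a = m" using assms(3) by simp
  then show ?thesis using assms(2,4) by simp
qed

lemma prime_power_coprime:
  fixes p q :: nat
  assumes "prime p" "\<not> p dvd q"
  shows "coprime (p ^ \<alpha>) q" "p ^ \<alpha> > 0" "q > 0"
  using assms by (auto simp: prime_imp_coprime coprime_power_left_iff prime_gt_0_nat intro: gr0I)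

context
  fixes L :: "('n::finite \<Rightarrow> int) set" and m q :: nat
  assumes L: "sublattice L" and index: "lat_index L = m * q"
    and coprime: "coprime m q" and pos: "m > 0" "q > 0"
begin

lemma mult_mem_mult_preimage: "of_nat m * v \<in> mult_preimage q L" "of_nat q * v \<in> mult_preimage m L"
  using lat_index_mult_mem[OF L, of v] index pos by (auto simp: mult_preimage_def mult_ac)

text \<open>The indices of \<open>mult_preimage q L\<close> in \<open>\<Lambda>\<close> and of \<open>L\<close> in \<open>mult_preimage q L\<close>
  multiply to \<open>m * q\<close>; the first quotient is killed by \<open>m\<close> and the second by \<open>q\<close>, so their
  orders divide powers of the coprime numbers \<open>m\<close> and \<open>q\<close>.\<close>

lemma coset_reps_mult_preimage_split:
  obtains s t where "coset_reps UNIV (mult_preimage q L) s" "length s = m"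
    "coset_reps (mult_preimage q L) L t" "length t = q"
proof -
  let ?LQ = "mult_preimage q L"
  have LQ: "sublattice ?LQ" and "L \<subseteq> ?LQ"
    using sublattice_mult_preimage[OF L] subset_mult_preimage[OF L] by auto
  obtain rs where rs: "coset_reps UNIV L rs" "length rs = m * q"
    using coset_reps_exist_lat_index[OF L] index pos by auto
  obtain s where s: "coset_reps UNIV ?LQ s"
    using coset_reps_exist_mono[OF LQ \<open>L \<subseteq> ?LQ\<close> rs(1) subset_UNIV] .
  obtain t where t: "coset_reps ?LQ L t"
    using coset_reps_exist_mono[OF L order_refl rs(1) subset_UNIV] .
  have mq: "m * q = length s * length t"
    using coset_reps_length_mult[OF L LQ sublattice_UNIV \<open>L \<subseteq> ?LQ\<close> subset_UNIV s t rs(1)] rs(2)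
    by simp
  obtain k1 where "length s dvd m ^ k1"
    using coset_reps_length_dvd_power[OF LQ sublattice_UNIV subset_UNIV s pos(1)]
      mult_mem_mult_preimage(1) by blast
  moreover obtain k2 where "length t dvd q ^ k2"
    using coset_reps_length_dvd_power[OF L LQ \<open>L \<subseteq> ?LQ\<close> t pos(2)] by (auto simp: mult_preimage_def)
  ultimately have "length s = m \<and> length t = q"
    using coprime_factorization_unique[OF coprime pos mq] by blast
  then show ?thesis using that s t by blast
qed

lemma coset_reps_mult_preimage:
  assumes t: "coset_reps (mult_preimage q L) L t"
  shows "coset_reps UNIV (mult_preimage m L) t"
  unfolding coset_reps_def
proof (intro conjI allI impI ballI)
  let ?L2 = "mult_preimage m L" and ?LQ = "mult_preimage q L"
  have L2: "sublattice ?L2" and LQ: "sublattice ?LQ"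
    using sublattice_mult_preimage L by auto
  show "set t \<subseteq> UNIV" by simp
  fix i j assume ij: "i < length t" "j < length t" "t ! i - t ! j \<in> ?L2"
  have "t ! i - t ! j \<in> ?LQ" using ij coset_reps_nth_mem[OF t] by (auto intro: sublattice_diff[OF LQ])
  then have "t ! i - t ! j \<in> L" using mult_preimage_Int_subset[OF L coprime] ij(3) by blast
  then show "i = j" using coset_reps_nth_eqD[OF t] ij by blast
next
  let ?L2 = "mult_preimage m L" and ?LQ = "mult_preimage q L"
  have L2: "sublattice ?L2" using sublattice_mult_preimage L by auto
  obtain u w :: int where uw: "\<And>v :: 'n \<Rightarrow> int. v = of_int u * (of_nat m * v) + of_int w * (of_nat q * v)"
    using coprime_combination[OF coprime] by blast
  fix v :: "'n \<Rightarrow> int"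
  have "of_int u * (of_nat m * v) \<in> ?LQ"
    using sublattice_of_int_mult[OF sublattice_mult_preimage[OF L]] mult_mem_mult_preimage(1) .
  then obtain j where j: "j < length t" "of_int u * (of_nat m * v) - t ! j \<in> L"
    using coset_reps_cover[OF t] by blast
  have "v - t ! j = of_int w * (of_nat q * v) + (of_int u * (of_nat m * v) - t ! j)"
    using uw[of v] by (simp add: algebra_simps)
  also have "\<dots> \<in> ?L2"
    using j(2) subset_mult_preimage[OF L]
    by (intro sublattice_add[OF L2] sublattice_of_int_mult[OF L2] mult_mem_mult_preimage(2)) auto
  finally show "\<exists>i<length t. v - t ! i \<in> ?L2" using j(1) by blast
qed

theorem lat_index_mult_preimage: "lat_index (mult_preimage m L) = q"
proof -
  obtain t where "coset_reps (mult_preimage q L) L t" "length t = q"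
    using coset_reps_mult_preimage_split by blast
  then show ?thesis
    using lat_index_coset_reps[OF sublattice_mult_preimage[OF L] coset_reps_mult_preimage] by simp
qed

theorem sublattice_of_index_eq_mult_preimage:
  assumes L3: "sublattice L3" "lat_index L3 = q" "L \<subseteq> L3"
  shows "L3 = mult_preimage m L"
proof (rule sublattice_eq_of_lat_index_eq[symmetric])
  show "mult_preimage m L \<subseteq> L3"
    using lat_index_mult_mem[OF L3(1)] L3 pos coprime by (intro mult_preimage_subset) auto
qed (use L3 pos lat_index_mult_preimage sublattice_mult_preimage L in auto)

theorem sublattice_of_index_iff:
  "sublattice L3 \<and> lat_index L3 = q \<and> L \<subseteq> L3 \<longleftrightarrow> L3 = mult_preimage m L"
  using sublattice_of_index_eq_mult_preimage lat_index_mult_preimage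
    sublattice_mult_preimage[OF L] subset_mult_preimage[OF L] by blast

end

section \<open>The group ring acting on periodic functions\<close>

definition group_ring_act :: "('g::ab_group_add \<Rightarrow>\<^sub>0 'r::comm_ring_1) \<Rightarrow> ('g \<Rightarrow> 'r) \<Rightarrow> 'g \<Rightarrow> 'r" where
  "group_ring_act b f g = (\<Sum>u\<in>Poly_Mapping.keys b. Poly_Mapping.lookup b u * f (g - u))"

lemma group_ring_act_superset:
  assumes "finite S" "Poly_Mapping.keys b \<subseteq> S"
  shows "group_ring_act b f g = (\<Sum>u\<in>S. Poly_Mapping.lookup b u * f (g - u))"
  unfolding group_ring_act_def
  by (rule sum.mono_neutral_left) (use assms in \<open>auto simp: in_keys_iff\<close>)

lemma group_ring_act_add: "group_ring_act (b + c) f g = group_ring_act b f g + group_ring_act c f g"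
proof -
  let ?S = "Poly_Mapping.keys b \<union> Poly_Mapping.keys c"
  have "finite ?S" "Poly_Mapping.keys (b + c) \<subseteq> ?S"
    using keys_add[of b c] by auto
  then show ?thesis
    by (simp add: group_ring_act_superset[of ?S] lookup_add distrib_right sum.distrib)
qed

lemma group_ring_act_zero [simp]: "group_ring_act 0 f g = 0"
  by (simp add: group_ring_act_def)

lemma group_ring_act_sum: "group_ring_act (\<Sum>i\<in>I. b i) f g = (\<Sum>i\<in>I. group_ring_act (b i) f g)"
  by (induction I rule: infinite_finite_induct) (auto simp: group_ring_act_add)

lemma group_ring_act_single: "group_ring_act (Poly_Mapping.single u c) f g = c * f (g - u)"
  by (simp add: group_ring_act_superset[of "{u}"] lookup_single)

lemma group_ring_act_one: "group_ring_act 1 f g = f g"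
  using group_ring_act_single[of 0 1 f g] by simp

lemma poly_mapping_sum_single:
  "b = (\<Sum>u\<in>Poly_Mapping.keys b. Poly_Mapping.single u (Poly_Mapping.lookup b u))"
  by (rule poly_mapping_eqI) (auto simp: lookup_sum lookup_single when_def in_keys_iff)

lemma group_ring_act_mult: "group_ring_act (b * c) f g = group_ring_act b (group_ring_act c f) g"
proof -
  let ?b = "Poly_Mapping.lookup b" and ?c = "Poly_Mapping.lookup c"
  have "b * c = (\<Sum>u\<in>Poly_Mapping.keys b. Poly_Mapping.single u (?b u))
      * (\<Sum>w\<in>Poly_Mapping.keys c. Poly_Mapping.single w (?c w))"
    using poly_mapping_sum_single[of b] poly_mapping_sum_single[of c] by simp
  also have "\<dots> = (\<Sum>u\<in>Poly_Mapping.keys b. \<Sum>w\<in>Poly_Mapping.keys c.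
      Poly_Mapping.single (u + w) (?b u * ?c w))"
    by (simp add: sum_product mult_single)
  finally have "group_ring_act (b * c) f g = (\<Sum>u\<in>Poly_Mapping.keys b. \<Sum>w\<in>Poly_Mapping.keys c.
      ?b u * ?c w * f (g - (u + w)))"
    by (simp add: group_ring_act_sum group_ring_act_single)
  also have "\<dots> = (\<Sum>u\<in>Poly_Mapping.keys b. ?b u * (\<Sum>w\<in>Poly_Mapping.keys c. ?c w * f (g - u - w)))"
    by (simp add: sum_distrib_left mult.assoc diff_diff_eq)
  finally show ?thesis
    by (simp add: group_ring_act_def)
qed

lemma group_ring_act_linear:
  "group_ring_act b (\<lambda>x. \<Sum>k\<in>A. c k * h k x) g = (\<Sum>k\<in>A. c k * group_ring_act b (h k) g)"
  unfolding group_ring_act_def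
  by (simp add: sum_distrib_left sum_distrib_right mult_ac sum.swap[of _ A])

lemma conv_eq_group_ring_act:
  assumes "fin_supp a"
  shows "conv f a = group_ring_act (Abs_poly_mapping a) f"
proof
  fix g
  have lookup: "Poly_Mapping.lookup (Abs_poly_mapping a) = a"
    using assms by (simp add: fin_supp_def)
  then have "Poly_Mapping.keys (Abs_poly_mapping a) = {x. a x \<noteq> 0}"
    by (auto simp: in_keys_iff)
  then show "conv f a g = group_ring_act (Abs_poly_mapping a) f g"
    unfolding conv_def group_ring_act_def lookup
    by (intro sum.reindex_bij_witness[of _ "\<lambda>u. g - u" "\<lambda>h. g - h"]) (auto simp: mult.commute)
qed

lemma semiring_char_poly_mapping [simp]:
  "CHAR('g::monoid_add \<Rightarrow>\<^sub>0 'r::comm_semiring_1) = CHAR('r)"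
proof (rule CHAR_eqI)
  show "of_nat CHAR('r) = (0 :: 'g \<Rightarrow>\<^sub>0 'r)"
    by (simp flip: single_of_nat)
  fix n assume "of_nat n = (0 :: 'g \<Rightarrow>\<^sub>0 'r)"
  then have "Poly_Mapping.lookup (of_nat n :: 'g \<Rightarrow>\<^sub>0 'r) 0 = 0" by simp
  then have "of_nat n = (0 :: 'r)"
    by (simp add: lookup_of_nat)
  then show "CHAR('r) dvd n"
    by (simp add: of_nat_eq_0_iff_char_dvd)
qed

lemma single_power:
  fixes u :: "'a::comm_semiring_1" and c :: "'r::comm_semiring_1"
  shows "Poly_Mapping.single u c ^ k = Poly_Mapping.single (of_nat k * u) (c ^ k)"
  by (induction k) (auto simp: mult_single algebra_simps)

lemma keys_power_CHAR_power:
  fixes b :: "('n \<Rightarrow> int) \<Rightarrow>\<^sub>0 'r::comm_ring_1"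
  assumes "prime CHAR('r)"
  shows "Poly_Mapping.keys (b ^ (CHAR('r) ^ k)) \<subseteq>
    (\<lambda>u. of_nat (CHAR('r) ^ k) * u) ` Poly_Mapping.keys b"
proof -
  let ?m = "CHAR('r) ^ k"
  have "b ^ ?m = (\<Sum>u\<in>Poly_Mapping.keys b. Poly_Mapping.single u (Poly_Mapping.lookup b u)) ^ ?m"
    using poly_mapping_sum_single[of b] by simp
  also have "\<dots> = (\<Sum>u\<in>Poly_Mapping.keys b. Poly_Mapping.single u (Poly_Mapping.lookup b u) ^ ?m)"
    by (rule freshmans_dream_sum') (use assms in simp_all)
  also have "\<dots> = (\<Sum>u\<in>Poly_Mapping.keys b.
      Poly_Mapping.single (of_nat ?m * u) (Poly_Mapping.lookup b u ^ ?m))"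
    by (simp add: single_power)
  finally show ?thesis
    using keys_sum[of "\<lambda>u. Poly_Mapping.single (of_nat ?m * u) (Poly_Mapping.lookup b u ^ ?m)"]
    by (auto split: if_splits)
qed

lemma power_CHAR_power_injective:
  fixes x y :: "'a::idom"
  assumes "prime CHAR('a)" and "x ^ (CHAR('a) ^ k) = y ^ (CHAR('a) ^ k)"
  shows "x = y"
proof -
  have "((x - y) + y) ^ (CHAR('a) ^ k) = (x - y) ^ (CHAR('a) ^ k) + y ^ (CHAR('a) ^ k)"
    by (rule freshmans_dream') (use assms in simp_all)
  then have "(x - y) ^ (CHAR('a) ^ k) = 0" using assms(2) by simp
  then show ?thesis by simp
qed

definition periodic :: "('n::finite \<Rightarrow> int) set \<Rightarrow> (('n \<Rightarrow> int) \<Rightarrow> 'r) \<Rightarrow> bool" where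
  "periodic L f \<longleftrightarrow> (\<forall>v. \<forall>w\<in>L. f (v + w) = f v)"

lemma periodic_funs_eq: "periodic_funs L = {f. periodic L f}"
  by (simp add: periodic_funs_def periodic_def)

lemma periodic_group_ring_act:
  assumes "periodic L f" shows "periodic L (group_ring_act b f)"
  unfolding periodic_def group_ring_act_def
proof (intro allI ballI)
  fix v w assume "w \<in> L"
  then have "f (v + w - u) = f (v - u)" for u
    using assms unfolding periodic_def by (metis add_diff_eq diff_add_eq)
  then show "(\<Sum>u\<in>Poly_Mapping.keys b. Poly_Mapping.lookup b u * f (v + w - u)) =
      (\<Sum>u\<in>Poly_Mapping.keys b. Poly_Mapping.lookup b u * f (v - u))" by simp
qed

definition coset_indicator :: "('n::finite \<Rightarrow> int) set \<Rightarrow> ('n \<Rightarrow> int) \<Rightarrow> ('n \<Rightarrow> int) \<Rightarrow> 'r::zero_neq_one"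
  where "coset_indicator L r x = (if x - r \<in> L then 1 else 0)"

lemma periodic_coset_indicator:
  assumes L: "sublattice L"
  shows "periodic L (coset_indicator L r :: ('n::finite \<Rightarrow> int) \<Rightarrow> 'r::zero_neq_one)"
  unfolding periodic_def coset_indicator_def
proof (intro allI ballI)
  fix v w assume "w \<in> L"
  then have "v + w - r \<in> L \<longleftrightarrow> v - r \<in> L"
    using sublattice_add[OF L, of "v - r" w] sublattice_diff[OF L, of "v + w - r" w]
    by (auto simp: algebra_simps)
  then show "(if v + w - r \<in> L then 1 else 0) = (if v - r \<in> L then 1 else (0 :: 'r))" by simp
qed

context
  fixes L :: "('n::finite \<Rightarrow> int) set" and rs :: "('n \<Rightarrow> int) list"
  assumes L: "sublattice L" and rs: "coset_reps UNIV L rs"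
begin

lemma coset_indicator_coset_reps:
  assumes "i < length rs" "j < length rs"
  shows "coset_indicator L (rs ! j) (rs ! i) = (if i = j then 1 else 0)"
proof (cases "i = j")
  case True
  then show ?thesis using sublattice_zero[OF L] by (simp add: coset_indicator_def)
next
  case False
  then have "rs ! i - rs ! j \<notin> L" using coset_reps_nth_eqD[OF rs assms] by blast
  then show ?thesis using False by (simp add: coset_indicator_def)
qed

lemma periodic_expansion:
  fixes f :: "('n \<Rightarrow> int) \<Rightarrow> 'r::comm_ring_1"
  assumes f: "periodic L f"
  shows "f x = (\<Sum>k = 0..<length rs. f (rs ! k) * coset_indicator L (rs ! k) x)"
proof -
  obtain k0 where k0: "k0 < length rs" "x - rs ! k0 \<in> L"
    using coset_reps_cover[OF rs UNIV_I] .
  have ind: "coset_indicator L (rs ! k) x = (if k = k0 then 1 else 0)" if "k < length rs" for k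
  proof (cases "x - rs ! k \<in> L")
    case True
    have "rs ! k - rs ! k0 = (x - rs ! k0) - (x - rs ! k)" by simp
    also have "\<dots> \<in> L" using sublattice_diff[OF L k0(2) True] .
    finally have "k = k0" using coset_reps_nth_eqD[OF rs that k0(1)] by blast
    then show ?thesis using True by (simp add: coset_indicator_def)
  next
    case False
    then have "k \<noteq> k0" using k0 by auto
    then show ?thesis using False by (simp add: coset_indicator_def)
  qed
  have "(\<Sum>k = 0..<length rs. f (rs ! k) * coset_indicator L (rs ! k) x)
      = (\<Sum>k = 0..<length rs. if k = k0 then f (rs ! k0) else 0)"
    by (rule sum.cong) (auto simp: ind)
  also have "\<dots> = f (rs ! k0)" using k0(1) by simp
  also have "\<dots> = f x"
  proof -
    have "f (rs ! k0 + (x - rs ! k0)) = f (rs ! k0)" using f k0(2) unfolding periodic_def by blast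
    then show ?thesis by simp
  qed
  finally show ?thesis by simp
qed

end

definition group_ring_mat ::
    "('n::finite \<Rightarrow> int) set \<Rightarrow> ('n \<Rightarrow> int) list \<Rightarrow> (('n \<Rightarrow> int) \<Rightarrow>\<^sub>0 'r::comm_ring_1) \<Rightarrow> 'r mat" where
  "group_ring_mat L rs b =
    mat (length rs) (length rs) (\<lambda>(i, j). group_ring_act b (coset_indicator L (rs ! j)) (rs ! i))"

lemma group_ring_mat_carrier: "group_ring_mat L rs b \<in> carrier_mat (length rs) (length rs)"
  by (simp add: group_ring_mat_def)

context
  fixes L :: "('n::finite \<Rightarrow> int) set" and rs :: "('n \<Rightarrow> int) list"
  assumes L: "sublattice L" and rs: "coset_reps UNIV L rs"
begin

lemma group_ring_mat_mult: "group_ring_mat L rs (b * c) = group_ring_mat L rs b * group_ring_mat L rs c"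
proof (rule eq_matI)
  fix i j assume "i < dim_row (group_ring_mat L rs b * group_ring_mat L rs c)"
    "j < dim_col (group_ring_mat L rs b * group_ring_mat L rs c)"
  then have ij: "i < length rs" "j < length rs" by (auto simp: group_ring_mat_def)
  let ?f = "group_ring_act c (coset_indicator L (rs ! j))"
  have expansion: "?f = (\<lambda>x. \<Sum>k = 0..<length rs. ?f (rs ! k) * coset_indicator L (rs ! k) x)"
    using periodic_expansion[OF L rs periodic_group_ring_act[OF periodic_coset_indicator[OF L]]]
    by blast
  have "group_ring_act b ?f (rs ! i) =
      (\<Sum>k = 0..<length rs. ?f (rs ! k) * group_ring_act b (coset_indicator L (rs ! k)) (rs ! i))"
    by (subst expansion, rule group_ring_act_linear)
  then show "group_ring_mat L rs (b * c) $$ (i, j) = (group_ring_mat L rs b * group_ring_mat L rs c) $$ (i, j)"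
    using ij by (simp add: group_ring_mat_def group_ring_act_mult scalar_prod_def mult.commute)
qed (auto simp: group_ring_mat_def)

lemma group_ring_mat_one: "group_ring_mat L rs 1 = 1\<^sub>m (length rs)"
  by (rule eq_matI) (auto simp: group_ring_mat_def group_ring_act_one coset_indicator_coset_reps[OF L rs])

lemma det_group_ring_mat_power: "det (group_ring_mat L rs (b ^ k)) = det (group_ring_mat L rs b) ^ k"
proof (induction k)
  case 0
  then show ?case by (simp add: group_ring_mat_one)
next
  case (Suc k)
  then show ?case
    by (simp add: group_ring_mat_mult det_mult[OF group_ring_mat_carrier group_ring_mat_carrier])
qed

end

definition block_diag_mat :: "nat \<Rightarrow> nat \<Rightarrow> 'a::zero mat \<Rightarrow> 'a mat" where
  "block_diag_mat m q B =
    mat (m * q) (m * q) (\<lambda>(x, y). if x div q = y div q then B $$ (x mod q, y mod q) else 0)"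

lemma det_block_diag_mat:
  fixes B :: "'a::idom mat"
  assumes B: "B \<in> carrier_mat q q" and q: "q > 0"
  shows "det (block_diag_mat m q B) = det B ^ m"
proof (induction m)
  case 0
  then show ?case by (simp add: block_diag_mat_def)
next
  case (Suc m)
  let ?F = "four_block_mat B (0\<^sub>m q (m * q)) (0\<^sub>m (m * q) q) (block_diag_mat m q B)"
  have F: "block_diag_mat (Suc m) q B = ?F"
  proof (rule eq_matI)
    fix x y assume "x < dim_row ?F" "y < dim_col ?F"
    then have "x < q + m * q" "y < q + m * q" using B by (auto simp: block_diag_mat_def)
    moreover have "z div q = Suc ((z - q) div q)" "z mod q = (z - q) mod q" if "\<not> z < q" for z
      using that q by (auto simp: div_if mod_if)
    ultimately show "block_diag_mat (Suc m) q B $$ (x, y) = ?F $$ (x, y)"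
      using B q by (auto simp: block_diag_mat_def)
  qed (use B in \<open>auto simp: block_diag_mat_def\<close>)
  have "det (block_diag_mat (Suc m) q B) = det B * det (block_diag_mat m q B)"
    unfolding F by (rule det_four_block_mat_lower_left_zero[OF B]) (auto simp: block_diag_mat_def)
  then show ?case using Suc by simp
qed

section \<open>Characteristic polynomials in a dual basis\<close>

lemma sum_fun_apply: "(sum f A) x = (\<Sum>a\<in>A. f a x)"
  for f :: "'b \<Rightarrow> 'a \<Rightarrow> 'c::comm_monoid_add"
  by (induction A rule: infinite_finite_induct) auto

lemma vector_space_fscale: "vector_space (fscale :: 'k::field \<Rightarrow> ('a \<Rightarrow> 'k) \<Rightarrow> ('a \<Rightarrow> 'k))"
  by unfold_locales (auto simp: fscale_def fun_eq_iff algebra_simps)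

locale dual_basis =
  fixes V :: "('a \<Rightarrow> 'k::field) set" and bs :: "('a \<Rightarrow> 'k) list" and rs :: "'a list"
  assumes length_points: "length rs = length bs"
    and subspace: "module.subspace fscale V"
    and basis_mem: "\<And>j. j < length bs \<Longrightarrow> bs ! j \<in> V"
    and dual: "\<And>i j. i < length bs \<Longrightarrow> j < length bs \<Longrightarrow> (bs ! j) (rs ! i) = (if i = j then 1 else 0)"
    and expansion: "\<And>f x. f \<in> V \<Longrightarrow> f x = (\<Sum>k = 0..<length bs. f (rs ! k) * (bs ! k) x)"
begin

sublocale vs: vector_space "fscale :: 'k \<Rightarrow> ('a \<Rightarrow> 'k) \<Rightarrow> ('a \<Rightarrow> 'k)"
  by (rule vector_space_fscale)

lemma expansion_fscale: "f \<in> V \<Longrightarrow> f = (\<Sum>k = 0..<length bs. fscale (f (rs ! k)) (bs ! k))"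
  by (rule ext) (simp add: expansion sum_fun_apply fscale_def)

lemma distinct_basis: "distinct bs"
  unfolding distinct_conv_nth
proof (intro allI impI)
  fix i j assume ij: "i < length bs" "j < length bs" "i \<noteq> j"
  show "bs ! i \<noteq> bs ! j"
  proof
    assume "bs ! i = bs ! j"
    then have "(bs ! i) (rs ! i) = (bs ! j) (rs ! i)" by simp
    then show False using dual[of i i] dual[of i j] ij by simp
  qed
qed

lemma independent_basis: "\<not> vs.dependent (set bs)"
proof
  assume "vs.dependent (set bs)"
  then obtain t u where tu: "finite t" "t \<subseteq> set bs" "(\<Sum>v\<in>t. fscale (u v) v) = 0" "\<exists>v\<in>t. u v \<noteq> 0"
    unfolding vs.dependent_explicit by blast
  then obtain v where v: "v \<in> t" "u v \<noteq> 0" by blast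
  then obtain i where i: "i < length bs" "v = bs ! i"
    using tu(2) by (metis in_set_conv_nth subsetD)
  have "0 = (\<Sum>w\<in>t. u w * w (rs ! i))"
    using fun_cong[OF tu(3), of "rs ! i"] by (simp add: sum_fun_apply fscale_def)
  also have "\<dots> = (\<Sum>w\<in>t. if w = v then u v else 0)"
  proof (rule sum.cong)
    fix w assume "w \<in> t"
    then obtain j where j: "j < length bs" "w = bs ! j"
      using tu(2) by (metis in_set_conv_nth subsetD)
    then have "w = v \<longleftrightarrow> j = i" using i distinct_basis by (simp add: nth_eq_iff_index_eq)
    then show "u w * w (rs ! i) = (if w = v then u v else 0)" using dual[of i j] i j by auto
  qed simp
  also have "\<dots> = u v" using v tu(1) by simp
  finally show False using v by simp
qed

lemma span_basis: "vs.span (set bs) = V"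
proof
  show "vs.span (set bs) \<subseteq> V"
    by (rule vs.span_minimal[OF _ subspace]) (auto simp: in_set_conv_nth intro: basis_mem)
  show "V \<subseteq> vs.span (set bs)"
  proof
    fix f assume "f \<in> V"
    have "(\<Sum>k = 0..<length bs. fscale (f (rs ! k)) (bs ! k)) \<in> vs.span (set bs)"
      by (intro vs.span_sum vs.span_scale vs.span_base) simp
    then show "f \<in> vs.span (set bs)" using expansion_fscale[OF \<open>f \<in> V\<close>] by simp
  qed
qed

end

text \<open>\<^const>\<open>charpoly_on\<close> works with an unspecified basis \<open>cs\<close>; a change of basis relates it
  to the dual basis.\<close>

locale dual_basis_change = dual_basis V bs rs
  for V :: "('a \<Rightarrow> 'k::field) set" and bs rs +
  fixes cs :: "('a \<Rightarrow> 'k) list" and T :: "('a \<Rightarrow> 'k) \<Rightarrow> ('a \<Rightarrow> 'k)"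
  assumes distinct_cs: "distinct cs" and independent_cs: "\<not> vs.dependent (set cs)"
    and span_cs: "vs.span (set cs) = V"
    and maps_to: "\<And>f. f \<in> V \<Longrightarrow> T f \<in> V"
    and additive: "\<And>f g. T (f + g) = T f + T g"
    and homogeneous: "\<And>c f. T (fscale c f) = fscale c (T f)"
begin

abbreviation "n \<equiv> length bs"
abbreviation "coord \<equiv> vs.representation (set cs)"

lemma cs_mem: "set cs \<subseteq> V"
  using vs.span_superset span_cs by blast

lemma length_cs: "length cs = n"
proof -
  have "card (set cs) = vs.dim V"
    by (rule vs.basis_card_eq_dim[OF cs_mem]) (use span_cs independent_cs in auto)
  moreover have "card (set bs) = vs.dim V"
    by (rule vs.basis_card_eq_dim) (use span_basis independent_basis basis_mem in \<open>auto simp: in_set_conv_nth\<close>)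
  ultimately show ?thesis using distinct_card distinct_cs distinct_basis by metis
qed

lemma cs_nth_mem: "i < n \<Longrightarrow> cs ! i \<in> V"
  using cs_mem length_cs nth_mem by fastforce

lemma T_zero: "T 0 = 0"
proof -
  have "T (fscale 0 0) = fscale 0 (T 0)" by (rule homogeneous)
  then show ?thesis by (simp add: fscale_def func_zero)
qed

lemma T_sum: "T (\<Sum>k\<in>K. fscale (c k) (v k)) = (\<Sum>k\<in>K. fscale (c k) (T (v k)))"
proof (induction K rule: infinite_finite_induct)
  case (infinite K)
  then show ?case by (simp only: sum.infinite[OF \<open>infinite K\<close>] T_zero)
next
  case empty
  then show ?case by (simp only: sum.empty T_zero)
next
  case (insert x F)
  then show ?case by (simp only: sum.insert[OF insert(1,2)] additive homogeneous insert(3))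
qed

lemma cs_expansion: "v \<in> V \<Longrightarrow> v = (\<Sum>k = 0..<n. fscale (coord v (cs ! k)) (cs ! k))"
proof -
  assume "v \<in> V"
  then have "(\<Sum>b\<in>set cs. fscale (coord v b) b) = v"
    by (intro vs.sum_representation_eq) (use independent_cs span_cs in auto)
  moreover have "set cs = (\<lambda>k. cs ! k) ` {0..<n}" using length_cs by (auto simp: set_conv_nth)
  moreover have "inj_on (\<lambda>k. cs ! k) {0..<n}"
    using distinct_cs length_cs by (auto simp: inj_on_def nth_eq_iff_index_eq)
  ultimately show ?thesis by (simp add: sum.reindex)
qed

lemma coord_sum:
  assumes "\<And>k. k \<in> K \<Longrightarrow> v k \<in> V"
  shows "coord (\<Sum>k\<in>K. fscale (c k) (v k)) b = (\<Sum>k\<in>K. c k * coord (v k) b)"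
proof -
  have "coord (\<Sum>k\<in>K. fscale (c k) (v k)) = (\<lambda>b. \<Sum>k\<in>K. coord (fscale (c k) (v k)) b)"
    by (rule vs.representation_sum) (use independent_cs span_cs assms in \<open>auto intro: vs.span_scale\<close>)
  then show ?thesis
    using vs.representation_scale independent_cs span_cs assms by simp
qed

lemma coord_cs_nth: "i < n \<Longrightarrow> j < n \<Longrightarrow> coord (cs ! j) (cs ! i) = (if i = j then 1 else 0)"
  using vs.representation_basis[OF independent_cs, of "cs ! j"] distinct_cs length_cs
  by (simp add: nth_eq_iff_index_eq)

definition to_cs :: "'k mat" where
  "to_cs = mat n n (\<lambda>(i, j). coord (bs ! j) (cs ! i))"

definition from_cs :: "'k mat" where
  "from_cs = mat n n (\<lambda>(i, j). (cs ! j) (rs ! i))"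

lemma to_cs_from_cs: "to_cs * from_cs = 1\<^sub>m n"
proof (rule eq_matI)
  fix i j assume "i < dim_row (1\<^sub>m n)" "j < dim_col (1\<^sub>m n)"
  then have ij: "i < n" "j < n" by auto
  have "(to_cs * from_cs) $$ (i, j) = (\<Sum>k = 0..<n. (cs ! j) (rs ! k) * coord (bs ! k) (cs ! i))"
    using ij by (simp add: to_cs_def from_cs_def scalar_prod_def mult.commute)
  also have "\<dots> = coord (\<Sum>k = 0..<n. fscale ((cs ! j) (rs ! k)) (bs ! k)) (cs ! i)"
    by (rule coord_sum[symmetric]) (simp add: basis_mem)
  also have "\<dots> = coord (cs ! j) (cs ! i)" using expansion_fscale[OF cs_nth_mem[OF ij(2)]] by simp
  finally show "(to_cs * from_cs) $$ (i, j) = 1\<^sub>m n $$ (i, j)" using coord_cs_nth ij by simp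
qed (auto simp: to_cs_def from_cs_def)

lemma from_cs_to_cs: "from_cs * to_cs = 1\<^sub>m n"
proof (rule eq_matI)
  fix i j assume "i < dim_row (1\<^sub>m n)" "j < dim_col (1\<^sub>m n)"
  then have ij: "i < n" "j < n" by auto
  have "(from_cs * to_cs) $$ (i, j) = (\<Sum>k = 0..<n. fscale (coord (bs ! j) (cs ! k)) (cs ! k)) (rs ! i)"
    using ij by (simp add: to_cs_def from_cs_def scalar_prod_def sum_fun_apply fscale_def mult.commute)
  also have "\<dots> = (bs ! j) (rs ! i)" using cs_expansion[OF basis_mem[OF ij(2)]] by simp
  finally show "(from_cs * to_cs) $$ (i, j) = 1\<^sub>m n $$ (i, j)" using dual ij by simp
qed (auto simp: to_cs_def from_cs_def)

lemma similar_coord_mat: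
  "similar_mat (mat n n (\<lambda>(i, j). coord (T (cs ! j)) (cs ! i))) (mat n n (\<lambda>(i, j). T (bs ! j) (rs ! i)))"
proof (rule similar_matI[OF _ to_cs_from_cs from_cs_to_cs])
  let ?M = "mat n n (\<lambda>(i, j). T (bs ! j) (rs ! i))"
  have "?M * from_cs = mat n n (\<lambda>(k, j). T (cs ! j) (rs ! k))"
  proof (rule eq_matI)
    fix k j assume "k < dim_row (mat n n (\<lambda>(k, j). T (cs ! j) (rs ! k)))"
      "j < dim_col (mat n n (\<lambda>(k, j). T (cs ! j) (rs ! k)))"
    then have kj: "k < n" "j < n" by auto
    have "(?M * from_cs) $$ (k, j) = (\<Sum>l = 0..<n. (cs ! j) (rs ! l) * T (bs ! l) (rs ! k))"
      using kj by (simp add: from_cs_def scalar_prod_def mult.commute)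
    also have "\<dots> = (\<Sum>l = 0..<n. fscale ((cs ! j) (rs ! l)) (T (bs ! l))) (rs ! k)"
      by (simp add: sum_fun_apply fscale_def)
    also have "\<dots> = T (\<Sum>l = 0..<n. fscale ((cs ! j) (rs ! l)) (bs ! l)) (rs ! k)"
      by (simp only: T_sum)
    finally show "(?M * from_cs) $$ (k, j) = mat n n (\<lambda>(k, j). T (cs ! j) (rs ! k)) $$ (k, j)"
      using expansion_fscale[OF cs_nth_mem[OF kj(2)]] kj by simp
  qed (auto simp: from_cs_def)
  moreover have "to_cs * mat n n (\<lambda>(k, j). T (cs ! j) (rs ! k)) = mat n n (\<lambda>(i, j). coord (T (cs ! j)) (cs ! i))"
  proof (rule eq_matI)
    fix i j assume "i < dim_row (mat n n (\<lambda>(i, j). coord (T (cs ! j)) (cs ! i)))"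
      "j < dim_col (mat n n (\<lambda>(i, j). coord (T (cs ! j)) (cs ! i)))"
    then have ij: "i < n" "j < n" by auto
    have "(to_cs * mat n n (\<lambda>(k, j). T (cs ! j) (rs ! k))) $$ (i, j)
        = (\<Sum>k = 0..<n. T (cs ! j) (rs ! k) * coord (bs ! k) (cs ! i))"
      using ij by (simp add: to_cs_def scalar_prod_def mult.commute)
    also have "\<dots> = coord (\<Sum>k = 0..<n. fscale (T (cs ! j) (rs ! k)) (bs ! k)) (cs ! i)"
      by (rule coord_sum[symmetric]) (simp add: basis_mem)
    finally show "(to_cs * mat n n (\<lambda>(k, j). T (cs ! j) (rs ! k))) $$ (i, j)
        = mat n n (\<lambda>(i, j). coord (T (cs ! j)) (cs ! i)) $$ (i, j)"
      using expansion_fscale[OF maps_to[OF cs_nth_mem[OF ij(2)]]] ij by simp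
  qed (auto simp: to_cs_def)
  ultimately show "mat n n (\<lambda>(i, j). coord (T (cs ! j)) (cs ! i)) = to_cs * ?M * from_cs"
    using assoc_mult_mat[of to_cs n n ?M n from_cs n] by (simp add: to_cs_def from_cs_def)
qed (auto simp: to_cs_def from_cs_def)

end

theorem charpoly_on_dual_basis:
  assumes "dual_basis V bs rs"
    and "\<And>f. f \<in> V \<Longrightarrow> T f \<in> V" "\<And>f g. T (f + g) = T f + T g" "\<And>c f. T (fscale c f) = fscale c (T f)"
  shows "charpoly_on V T = char_poly (mat (length bs) (length bs) (\<lambda>(i, j). T (bs ! j) (rs ! i)))"
proof -
  interpret dual_basis V bs rs by (rule assms(1))
  define P where "P cs \<longleftrightarrow> distinct cs \<and> \<not> vs.dependent (set cs) \<and> vs.span (set cs) = V" for cs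
  define cs where "cs = (SOME cs. P cs)"
  have "P cs" unfolding cs_def
    by (rule someI[of P bs]) (simp add: P_def distinct_basis independent_basis span_basis)
  then interpret dual_basis_change V bs rs cs T
    using assms(2-4) by unfold_locales (auto simp: P_def)
  have "charpoly_on V T = char_poly (mat n n (\<lambda>(i, j). coord (T (cs ! j)) (cs ! i)))"
    unfolding charpoly_on_def Let_def cs_def[symmetric, unfolded P_def] using length_cs by simp
  also have "\<dots> = char_poly (mat n n (\<lambda>(i, j). T (bs ! j) (rs ! i)))"
    by (rule char_poly_similar[OF similar_coord_mat])
  finally show ?thesis .
qed

section \<open>Characteristic polynomials of convolution operators\<close>

lemma dual_basis_coset_indicators:
  assumes L: "sublattice L" and rs: "coset_reps UNIV L rs"
  shows "dual_basis (periodic_funs L) (map (\<lambda>r. coset_indicator L r :: _ \<Rightarrow> 'k::field) rs) rs"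
proof
  let ?bs = "map (\<lambda>r. coset_indicator L r :: _ \<Rightarrow> 'k) rs"
  interpret vs: vector_space "fscale :: 'k \<Rightarrow> _" by (rule vector_space_fscale)
  show "length rs = length ?bs" by simp
  show "module.subspace fscale (periodic_funs L :: (_ \<Rightarrow> 'k) set)"
    unfolding vs.subspace_def periodic_funs_def fscale_def by auto
  show "?bs ! j \<in> periodic_funs L" if "j < length ?bs" for j
    using that periodic_coset_indicator[OF L] by (simp add: periodic_funs_eq)
  show "(?bs ! j) (rs ! i) = (if i = j then 1 else 0)" if "i < length ?bs" "j < length ?bs" for i j
    using that coset_indicator_coset_reps[OF L rs, of i j] by simp
  show "f x = (\<Sum>k = 0..<length ?bs. f (rs ! k) * (?bs ! k) x)" if "f \<in> periodic_funs L" for f x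
    using that periodic_expansion[OF L rs, of f x] by (simp add: periodic_funs_eq)
qed

lemma charpoly_on_conv_eq_group_ring_mat:
  fixes a :: "('n::finite \<Rightarrow> int) \<Rightarrow> 'k::field"
  assumes L: "sublattice L" and rs: "coset_reps UNIV L rs" and a: "fin_supp a"
  shows "charpoly_on (periodic_funs L) (\<lambda>f. conv f a) = char_poly (group_ring_mat L rs (Abs_poly_mapping a))"
proof -
  let ?bs = "map (\<lambda>r. coset_indicator L r :: _ \<Rightarrow> 'k) rs"
  have "charpoly_on (periodic_funs L) (\<lambda>f. conv f a) =
      char_poly (mat (length ?bs) (length ?bs) (\<lambda>(i, j). conv (?bs ! j) a (rs ! i)))"
  proof (rule charpoly_on_dual_basis[OF dual_basis_coset_indicators[OF L rs]])
    show "conv f a \<in> periodic_funs L" if "f \<in> periodic_funs L" for f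
      using that periodic_group_ring_act by (simp add: conv_eq_group_ring_act[OF a] periodic_funs_eq)
    show "conv (f + g) a = conv f a + conv g a" for f g
      by (rule ext) (simp add: conv_def distrib_right sum.distrib)
    show "conv (fscale c f) a = fscale c (conv f a)" for c f
      by (rule ext) (simp add: conv_def fscale_def sum_distrib_left mult.assoc)
  qed
  also have "mat (length ?bs) (length ?bs) (\<lambda>(i, j). conv (?bs ! j) a (rs ! i)) =
      group_ring_mat L rs (Abs_poly_mapping a)"
    by (rule eq_matI) (auto simp: group_ring_mat_def conv_eq_group_ring_act[OF a])
  finally show ?thesis .
qed

definition X_minus :: "(('n::finite \<Rightarrow> int) \<Rightarrow> 'k::field) \<Rightarrow> ('n \<Rightarrow> int) \<Rightarrow>\<^sub>0 'k poly" where
  "X_minus a = Poly_Mapping.single 0 [:0, 1:] + Abs_poly_mapping (\<lambda>u. [:- a u:])"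

lemma group_ring_act_X_minus:
  assumes a: "fin_supp a"
  shows "group_ring_act (X_minus a) (\<lambda>x. [:f x:]) g = [:0, 1:] * [:f g:] - [:group_ring_act (Abs_poly_mapping a) f g:]"
proof -
  have fin: "finite {u. a u \<noteq> 0}" using a by (simp add: fin_supp_def)
  have lookup: "Poly_Mapping.lookup (Abs_poly_mapping a) = a"
    "Poly_Mapping.lookup (Abs_poly_mapping (\<lambda>u. [:- a u:])) = (\<lambda>u. [:- a u:])"
    using fin by simp_all
  then have keys: "Poly_Mapping.keys (Abs_poly_mapping a) = {u. a u \<noteq> 0}"
    "Poly_Mapping.keys (Abs_poly_mapping (\<lambda>u. [:- a u:])) = {u. a u \<noteq> 0}"
    by (auto simp: in_keys_iff)
  have "group_ring_act (Abs_poly_mapping (\<lambda>u. [:- a u:])) (\<lambda>x. [:f x:]) g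
      = (\<Sum>u\<in>{u. a u \<noteq> 0}. [:- (a u * f (g - u)):])"
    unfolding group_ring_act_def keys lookup by (simp add: mult.commute)
  also have "\<dots> = - [:group_ring_act (Abs_poly_mapping a) f g:]"
    unfolding group_ring_act_def keys lookup
    by (induction rule: infinite_finite_induct) auto
  finally show ?thesis
    unfolding X_minus_def group_ring_act_add group_ring_act_single by simp
qed

lemma char_poly_group_ring_mat:
  fixes a :: "('n::finite \<Rightarrow> int) \<Rightarrow> 'k::field"
  assumes L: "sublattice L" and rs: "coset_reps UNIV L rs" and a: "fin_supp a"
  shows "char_poly (group_ring_mat L rs (Abs_poly_mapping a)) = det (group_ring_mat L rs (X_minus a))"
proof -
  have "group_ring_mat L rs (X_minus a) = char_poly_matrix (group_ring_mat L rs (Abs_poly_mapping a))"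
  proof (rule eq_matI)
    fix i j assume "i < dim_row (char_poly_matrix (group_ring_mat L rs (Abs_poly_mapping a)))"
      "j < dim_col (char_poly_matrix (group_ring_mat L rs (Abs_poly_mapping a)))"
    then have ij: "i < length rs" "j < length rs"
      by (auto simp: char_poly_matrix_def group_ring_mat_def)
    have "(coset_indicator L r :: _ \<Rightarrow> 'k poly) = (\<lambda>x. [:coset_indicator L r x:])" for r
      by (auto simp: coset_indicator_def)
    moreover have "(coset_indicator L (rs ! j) (rs ! i) :: 'k) = (if i = j then 1 else 0)"
      by (rule coset_indicator_coset_reps[OF L rs ij])
    ultimately show "group_ring_mat L rs (X_minus a) $$ (i, j) =
        char_poly_matrix (group_ring_mat L rs (Abs_poly_mapping a)) $$ (i, j)"
      using ij
      by (simp add: group_ring_mat_def char_poly_matrix_def group_ring_act_X_minus[OF a])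
  qed (auto simp: char_poly_matrix_def group_ring_mat_def)
  then show ?thesis by (simp add: char_poly_def)
qed

lemma charpoly_on_conv_eq_det:
  fixes a :: "('n::finite \<Rightarrow> int) \<Rightarrow> 'k::field"
  assumes "sublattice L" "coset_reps UNIV L rs" "fin_supp a"
  shows "charpoly_on (periodic_funs L) (\<lambda>f. conv f a) = det (group_ring_mat L rs (X_minus a))"
  using charpoly_on_conv_eq_group_ring_mat[OF assms] char_poly_group_ring_mat[OF assms] by simp

context
  fixes A B C :: "('n::finite \<Rightarrow> int) set" and s t :: "('n \<Rightarrow> int) list"
  assumes A: "sublattice A" and C: "sublattice C" and "A \<subseteq> B" "A \<subseteq> C"
    and Int: "B \<inter> C \<subseteq> A"
    and s: "coset_reps UNIV C s" and t: "coset_reps C A t"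
begin

lemma coset_indicator_reps_sum:
  assumes x: "x < length s * length t" and y: "y < length s * length t" and "u \<in> C"
  shows "coset_indicator A (reps_sum s t ! y) (reps_sum s t ! x - u) =
    (if x div length t = y div length t
     then coset_indicator B (t ! (y mod length t)) (t ! (x mod length t) - u)
     else (0 :: 'r::zero_neq_one))"
proof -
  let ?q = "length t"
  let ?ds = "s ! (x div ?q) - s ! (y div ?q)" and ?w = "t ! (x mod ?q) - u - t ! (y mod ?q)"
  have dm: "x div ?q < length s" "x mod ?q < ?q" "y div ?q < length s" "y mod ?q < ?q"
    using div_mod_less_length[OF x] div_mod_less_length[OF y] by auto
  have split: "reps_sum s t ! x - u - reps_sum s t ! y = ?ds + ?w"
    by (simp add: nth_reps_sum x y algebra_simps)
  have w: "?w \<in> C"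
    using coset_reps_nth_mem[OF t] dm \<open>u \<in> C\<close>
    by (intro sublattice_diff[OF C]) auto
  show ?thesis
  proof (cases "x div ?q = y div ?q")
    case True
    then have eq: "reps_sum s t ! x - u - reps_sum s t ! y = ?w" using split by simp
    have "?w \<in> A \<longleftrightarrow> ?w \<in> B" using w Int \<open>A \<subseteq> B\<close> by blast
    then show ?thesis using True unfolding coset_indicator_def eq by simp
  next
    case False
    have "?ds + ?w \<notin> A"
    proof
      assume "?ds + ?w \<in> A"
      then have "(?ds + ?w) - ?w \<in> C" using \<open>A \<subseteq> C\<close> w by (blast intro: sublattice_diff[OF C])
      then show False using False coset_reps_nth_eqD[OF s dm(1,3)] by simp
    qed
    then show ?thesis using False unfolding coset_indicator_def split by simp
  qed
qed

lemma group_ring_mat_reps_sum: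
  fixes c :: "('n \<Rightarrow> int) \<Rightarrow>\<^sub>0 'r::comm_ring_1"
  assumes keys: "Poly_Mapping.keys c \<subseteq> C"
  shows "group_ring_mat A (reps_sum s t) c = block_diag_mat (length s) (length t) (group_ring_mat B t c)"
proof (rule eq_matI)
  let ?q = "length t"
  have indicator: "(coset_indicator A (reps_sum s t ! y) (reps_sum s t ! x - u) :: 'r) =
      (if x div ?q = y div ?q then coset_indicator B (t ! (y mod ?q)) (t ! (x mod ?q) - u) else 0)"
    if "x < length s * ?q" "y < length s * ?q" "u \<in> Poly_Mapping.keys c" for x y u
    by (rule coset_indicator_reps_sum[OF that(1,2) subsetD[OF keys that(3)]])
  fix x y assume "x < dim_row (block_diag_mat (length s) ?q (group_ring_mat B t c))"
    "y < dim_col (block_diag_mat (length s) ?q (group_ring_mat B t c))"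
  then have x: "x < length s * ?q" and y: "y < length s * ?q" by (auto simp: block_diag_mat_def)
  have dm: "x mod ?q < ?q" "y mod ?q < ?q" using div_mod_less_length[OF x] div_mod_less_length[OF y] by auto
  have "group_ring_mat A (reps_sum s t) c $$ (x, y) =
      (\<Sum>u\<in>Poly_Mapping.keys c. Poly_Mapping.lookup c u *
        coset_indicator A (reps_sum s t ! y) (reps_sum s t ! x - u))"
    using x y by (simp add: group_ring_mat_def group_ring_act_def)
  also have "\<dots> = (if x div ?q = y div ?q then
      (\<Sum>u\<in>Poly_Mapping.keys c. Poly_Mapping.lookup c u *
        coset_indicator B (t ! (y mod ?q)) (t ! (x mod ?q) - u)) else 0)"
    using indicator[OF x y] by (cases "x div ?q = y div ?q") (simp_all cong: sum.cong)
  also have "\<dots> = block_diag_mat (length s) ?q (group_ring_mat B t c) $$ (x, y)"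
    using x y dm by (simp add: block_diag_mat_def group_ring_mat_def group_ring_act_def)
  finally show "group_ring_mat A (reps_sum s t) c $$ (x, y) =
      block_diag_mat (length s) ?q (group_ring_mat B t c) $$ (x, y)" .
qed (auto simp: block_diag_mat_def group_ring_mat_def)

end

theorem charpoly_on_conv_mult_preimage:
  fixes L :: "('n::finite \<Rightarrow> int) set" and a :: "('n \<Rightarrow> int) \<Rightarrow> 'k::field" and p \<alpha> q :: nat
  defines "m \<equiv> p ^ \<alpha>"
  assumes char: "CHAR('k) = p" and p: "prime p" and L: "sublattice L" and index: "lat_index L = m * q"
    and "\<not> p dvd q" and a: "fin_supp a"
  shows "charpoly_on (periodic_funs L) (\<lambda>f. conv f a) =
    charpoly_on (periodic_funs (mult_preimage m L)) (\<lambda>f. conv f a) ^ m"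
proof -
  let ?L2 = "mult_preimage m L" and ?LQ = "mult_preimage q L"
  have m_q: "coprime m q" "m > 0" "q > 0"
    unfolding m_def using prime_power_coprime[OF p \<open>\<not> p dvd q\<close>] by blast+
  obtain s t where s: "coset_reps UNIV ?LQ s" "length s = m" and t: "coset_reps ?LQ L t" "length t = q"
    using coset_reps_mult_preimage_split[OF L index m_q] by blast
  have L2: "sublattice ?L2" and LQ: "sublattice ?LQ" and "L \<subseteq> ?L2" "L \<subseteq> ?LQ"
    using sublattice_mult_preimage[OF L] subset_mult_preimage[OF L] by auto
  have t2: "coset_reps UNIV ?L2 t"
    by (rule coset_reps_mult_preimage[OF L index m_q t(1)])
  have st: "coset_reps UNIV L (reps_sum s t)"
    by (rule coset_reps_reps_sum[OF L LQ sublattice_UNIV \<open>L \<subseteq> ?LQ\<close> subset_UNIV s(1) t(1)])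
  define b where "b = X_minus a"
  have "Poly_Mapping.keys (b ^ m) \<subseteq> ?LQ"
    using keys_power_CHAR_power[of b \<alpha>] p mult_mem_mult_preimage(1)[OF L index m_q]
    by (auto simp: m_def char)
  then have "group_ring_mat L (reps_sum s t) (b ^ m) = block_diag_mat m q (group_ring_mat ?L2 t (b ^ m))"
    using group_ring_mat_reps_sum[OF L LQ \<open>L \<subseteq> ?L2\<close> \<open>L \<subseteq> ?LQ\<close>
        mult_preimage_Int_subset[OF L m_q(1)] s(1) t(1)] s(2) t(2) by simp
  then have "det (group_ring_mat L (reps_sum s t) b) ^ m = (det (group_ring_mat ?L2 t b) ^ m) ^ m"
    using det_block_diag_mat[OF group_ring_mat_carrier[of ?L2 t "b ^ m"]] t(2) m_q(3)
    by (simp add: det_group_ring_mat_power[OF L st, symmetric] det_group_ring_mat_power[OF L2 t2])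
  then have "det (group_ring_mat L (reps_sum s t) b) = det (group_ring_mat ?L2 t b) ^ m"
    using power_CHAR_power_injective[where 'a = "'k poly"] p by (simp add: m_def char)
  then show ?thesis
    using charpoly_on_conv_eq_det[OF L st a] charpoly_on_conv_eq_det[OF L2 t2 a] by (simp add: b_def)
qed

lemma Gcd_image_power:
  fixes S :: "'k::field_gcd poly set"
  assumes "finite S" "n > 0"
  shows "Gcd ((\<lambda>x. x ^ n) ` S) = Gcd S ^ n"
  using assms by (induction S rule: finite_induct) auto

lemma CharPoly_eq_power:
  assumes "n > 0" and "\<And>a. a \<in> set as \<Longrightarrow>
    charpoly_on (periodic_funs L) (\<lambda>f. conv f a) = charpoly_on (periodic_funs L2) (\<lambda>f. conv f a) ^ n"
  shows "CharPoly as L = CharPoly as L2 ^ n"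
proof -
  let ?S = "set (map (\<lambda>a. charpoly_on (periodic_funs L2) (\<lambda>f. conv f a)) as)"
  have "set (map (\<lambda>a. charpoly_on (periodic_funs L) (\<lambda>f. conv f a)) as) = (\<lambda>x. x ^ n) ` ?S"
    using assms(2) by (auto simp: image_image)
  then have "CharPoly as L = Gcd ((\<lambda>x. x ^ n) ` ?S)"
    unfolding CharPoly_def by (rule arg_cong)
  also have "\<dots> = Gcd ?S ^ n"
    by (rule Gcd_image_power) (simp_all add: assms(1))
  finally show ?thesis unfolding CharPoly_def .
qed

theorem corollary1p5:
  fixes L' :: "('n::finite \<Rightarrow> int) set"
    and p q \<alpha> :: nat
  assumes "CHAR('k::field_gcd) = p" and "p > 0"
    and "sublattice L'"
    and "lat_index L' = p ^ \<alpha> * q"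
    and "\<not> p dvd q"
  shows "(\<exists>!L''. sublattice L'' \<and> lat_index L'' = q \<and> L' \<subseteq> L'')
       \<and> (\<forall>L''. sublattice L'' \<and> lat_index L'' = q \<and> L' \<subseteq> L'' \<longrightarrow>
            (\<forall>as :: ((('n \<Rightarrow> int) \<Rightarrow> 'k) list). as \<noteq> [] \<and> (\<forall>a\<in>set as. fin_supp a) \<longrightarrow>
               CharPoly as L' = (CharPoly as L'') ^ (p ^ \<alpha>)))"
proof -
  have p: "prime p" using assms(1,2) prime_CHAR_semidom[where 'a = 'k] by simp
  note m_q = prime_power_coprime[OF p assms(5)]
  note intermediate = sublattice_of_index_iff[OF assms(3,4) m_q]
  show ?thesis
  proof (intro conjI allI impI)
    show "\<exists>!L''. sublattice L'' \<and> lat_index L'' = q \<and> L' \<subseteq> L''"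
      by (simp only: intermediate) simp
    fix L'' and as :: "(('n \<Rightarrow> int) \<Rightarrow> 'k) list"
    assume "sublattice L'' \<and> lat_index L'' = q \<and> L' \<subseteq> L''"
      and as: "as \<noteq> [] \<and> (\<forall>a\<in>set as. fin_supp a)"
    then have "L'' = mult_preimage (p ^ \<alpha>) L'" using intermediate by blast
    moreover have "CharPoly as L' = CharPoly as (mult_preimage (p ^ \<alpha>) L') ^ (p ^ \<alpha>)"
      using as charpoly_on_conv_mult_preimage[OF assms(1) p assms(3,4,5)]
      by (intro CharPoly_eq_power[OF m_q(2)]) blast
    ultimately show "CharPoly as L' = CharPoly as L'' ^ (p ^ \<alpha>)" by simp
  qed
qed

end
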